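(* Let $N\ge 1$, let $q$ be an indeterminate and $z_1,\dots,z_N$ indeterminates, and put $\delta=(N-1,N-2,\dots,0)$. Then $$\prod_{1\le i<j\le N}(z_i-q^{-2}z_j)=\sum_{w\in S_N}(-q^{-2})^{\ell(w)}z^{w(\delta)}+\sum_{\gamma}a_{\gamma}\,z_1^{\gamma_1}z_2^{\gamma_2}\cdots z_N^{\gamma_N},$$ where the second sum is finite, and for each monomial $z_1^{\gamma_1}\cdots z_N^{\gamma_N}$ occurring in it there exist $i\neq j$ with $\gamma_i=\gamma_j$, and its coefficient satisfies $a_\gamma\in\mathbb{Z}[q^{-2}]$ and $a_\gamma(1)=0$ (i.e. $a_\gamma$ vanishes at $q^{-2}=1$).
   Context: $S_N$ is the symmetric group on $\{1,\dots,N\}$ and $\ell(w)$ is the number of inversions of $w$, i.e. the number of pairs $i<j$ with $w(i)>w(j)$. For $w\in S_N$, $z^{w(\delta)}$ denotes the monomial $\prod_{i=1}^N z_{w(i)}^{\,N-i}$. *)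

theory Defs
  imports "HOL-Library.Poly_Mapping" "HOL-Computational_Algebra.Polynomial"
    "HOL-Combinatorics.Permutations"
begin

text \<open>Multivariate polynomials in variables z_1, z_2, ... (indexed by nat) with
  coefficients in Z[t], where t stands for q^{-2}.\<close>
type_synonym mpoly = "(nat \<Rightarrow>\<^sub>0 nat) \<Rightarrow>\<^sub>0 int poly"

definition zvar :: "nat \<Rightarrow> mpoly" where
  "zvar i = Poly_Mapping.single (Poly_Mapping.single i 1) 1"

definition const :: "int poly \<Rightarrow> mpoly" where
  "const c = Poly_Mapping.single 0 c"

definition tvar :: "int poly" where
  "tvar = [:0, 1:]"

definition inversions :: "nat \<Rightarrow> (nat \<Rightarrow> nat) \<Rightarrow> nat" where
  "inversions N w = card {(i, j). i \<in> {1..N} \<and> j \<in> {1..N} \<and> i < j \<and> w i > w j}"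

end

theory Submission
  imports Defs
begin

text \<open>Expanding the product, the factor for \<open>i < j\<close> contributes either \<open>z\<^sub>i\<close> ("\<open>i\<close> beats \<open>j\<close>")
  or \<open>-t z\<^sub>j\<close> ("\<open>j\<close> beats \<open>i\<close>"), where \<open>t = q\<^sup>-\<^sup>2\<close>. So the product is a sum over all
  tournaments on \<open>{1..N}\<close>: the exponent of \<open>z\<^sub>x\<close> is the number of wins of \<open>x\<close>, and the
  coefficient is \<open>(-t)\<close> to the number of upsets (games won by the larger player).
  A tournament with pairwise distinct scores is transitive, i.e. the ranking given by a
  permutation \<open>w\<close>, and contributes exactly \<open>(-t)\<^bsup>\<ell>(w)\<^esup> z\<^bsup>w(\<delta>)\<^esup>\<close>. Every other
  monomial has two equal exponents \<open>\<gamma>\<^sub>a = \<gamma>\<^sub>b\<close>; relabelling its tournaments by the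
  transposition \<open>(a b)\<close> preserves the scores and changes the number of upsets by the odd
  number of inversions of \<open>(a b)\<close>, so the contributions cancel at \<open>t = 1\<close>.\<close>

section \<open>Expanding the product over tournaments\<close>

definition pairs :: "nat \<Rightarrow> (nat \<times> nat) set" where
  "pairs N = {(i, j). i \<in> {1..N} \<and> j \<in> {1..N} \<and> i < j}"

lemma finite_pairs [simp]: "finite (pairs N)"
  by (rule finite_subset[of _ "{1..N} \<times> {1..N}"]) (auto simp: pairs_def)

lemma less_of_mem_pairs: "(i, j) \<in> pairs N \<Longrightarrow> i < j"
  by (simp add: pairs_def)

text \<open>A set \<open>B \<subseteq> pairs N\<close> encodes a tournament on \<open>{1..N}\<close>: for \<open>i < j\<close>, player \<open>i\<close>
  beats \<open>j\<close> iff \<open>(i, j) \<in> B\<close>. This corresponds to choosing \<open>z\<^sub>i\<close> from the factor of \<open>(i, j)\<close>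
  if \<open>(i, j) \<in> B\<close> and \<open>-t z\<^sub>j\<close> otherwise.\<close>
definition score :: "nat \<Rightarrow> (nat \<times> nat) set \<Rightarrow> nat \<Rightarrow>\<^sub>0 nat" where
  "score N B =
    (\<Sum>(i, j)\<in>B. Poly_Mapping.single i 1) + (\<Sum>(i, j)\<in>pairs N - B. Poly_Mapping.single j 1)"

definition tournament_term :: "nat \<Rightarrow> (nat \<times> nat) set \<Rightarrow> mpoly" where
  "tournament_term N B = Poly_Mapping.single (score N B) ((- tvar) ^ card (pairs N - B))"

lemma prod_single:
  fixes k :: "'b \<Rightarrow> 'k::comm_monoid_add" and c :: "'b \<Rightarrow> 'c::comm_semiring_1"
  shows "finite A \<Longrightarrow>
    (\<Prod>x\<in>A. Poly_Mapping.single (k x) (c x)) = Poly_Mapping.single (\<Sum>x\<in>A. k x) (\<Prod>x\<in>A. c x)"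
  by (induct A rule: finite_induct) (auto simp: mult_single)

lemma zvar_power: "zvar i ^ n = Poly_Mapping.single (Poly_Mapping.single i n) 1"
proof (induction n)
  case (Suc n)
  have "Poly_Mapping.single i (Suc n) = Poly_Mapping.single i 1 + Poly_Mapping.single i n"
    by (simp flip: single_add)
  with Suc show ?case by (simp add: zvar_def mult_single)
qed simp

lemma const_mult_prod_zvar_power:
  "const c * (\<Prod>i\<in>I. zvar (w i) ^ e i)
    = Poly_Mapping.single (\<Sum>i\<in>I. Poly_Mapping.single (w i) (e i)) c"
  by (cases "finite I") (simp_all add: zvar_power prod_single const_def mult_single)

lemma prod_pairs_eq_sum_tournament_terms:
  "(\<Prod>(i, j)\<in>pairs N. zvar i - const tvar * zvar j) = (\<Sum>B\<in>Pow (pairs N). tournament_term N B)"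
proof -
  have "(\<Prod>(i, j)\<in>pairs N. zvar i - const tvar * zvar j)
      = (\<Prod>(i, j)\<in>pairs N. Poly_Mapping.single (Poly_Mapping.single i 1) 1
          + Poly_Mapping.single (Poly_Mapping.single j 1) (- tvar))"
    by (rule prod.cong) (auto simp: zvar_def const_def mult_single single_uminus)
  also have "\<dots> = (\<Sum>B\<in>Pow (pairs N).
      (\<Prod>(i, j)\<in>B. Poly_Mapping.single (Poly_Mapping.single i 1) 1) *
      (\<Prod>(i, j)\<in>pairs N - B. Poly_Mapping.single (Poly_Mapping.single j 1) (- tvar)))"
    using prod_add[OF finite_pairs,
        of "\<lambda>(i, j). Poly_Mapping.single (Poly_Mapping.single i (1::nat)) 1"
        "\<lambda>(i, j). Poly_Mapping.single (Poly_Mapping.single j (1::nat)) (- tvar)" N]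
    by (simp add: split_def)
  also have "\<dots> = (\<Sum>B\<in>Pow (pairs N). tournament_term N B)"
  proof (rule sum.cong)
    fix B assume "B \<in> Pow (pairs N)"
    then have "finite B" "finite (pairs N - B)" using finite_subset[OF _ finite_pairs] by auto
    then show "(\<Prod>(i, j)\<in>B. Poly_Mapping.single (Poly_Mapping.single i 1) 1) *
      (\<Prod>(i, j)\<in>pairs N - B. Poly_Mapping.single (Poly_Mapping.single j 1) (- tvar))
      = tournament_term N B"
      by (simp add: case_prod_beta prod_single mult_single tournament_term_def score_def)
  qed simp
  finally show ?thesis .
qed

section \<open>Inversions\<close>

lemma prod_if_neg_one:
  "finite A \<Longrightarrow> (\<Prod>x\<in>A. if P x then - 1 else 1 :: 'a::comm_ring_1) = (- 1) ^ card {x\<in>A. P x}"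
  by (simp add: prod.If_cases Int_def)

lemma inversions_eq_card_pairs: "inversions N \<sigma> = card {(i, j) \<in> pairs N. \<sigma> j < \<sigma> i}"
  unfolding inversions_def pairs_def by (rule arg_cong[where f = card]) auto

lemma permutes_apply_pair:
  assumes \<sigma>: "\<sigma> permutes {1..N}" and ij: "(i, j) \<in> pairs N"
  shows "\<sigma> i \<in> {1..N}" "\<sigma> j \<in> {1..N}" "\<sigma> i \<noteq> \<sigma> j"
proof -
  have "i \<in> {1..N}" "j \<in> {1..N}" "i \<noteq> j" using ij by (auto simp: pairs_def)
  then show "\<sigma> i \<in> {1..N}" "\<sigma> j \<in> {1..N}" "\<sigma> i \<noteq> \<sigma> j"
    using permutes_in_image[OF \<sigma>] permutes_inj[OF \<sigma>] by (auto dest: injD)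
qed

lemma bij_betw_sort_permuted_pairs:
  assumes \<sigma>: "\<sigma> permutes {1..N}"
  shows "bij_betw (\<lambda>(i, j). (min (\<sigma> i) (\<sigma> j), max (\<sigma> i) (\<sigma> j))) (pairs N) (pairs N)"
    (is "bij_betw ?sort _ _")
proof (rule bij_betw_imageI)
  have inj: "\<sigma> u = \<sigma> v \<longleftrightarrow> u = v" for u v
    using permutes_inj[OF \<sigma>] by (auto dest: injD)
  show "inj_on ?sort (pairs N)"
  proof (rule inj_onI)
    fix p q assume "p \<in> pairs N" "q \<in> pairs N" "?sort p = ?sort q"
    then show "p = q"
      by (cases p; cases q) (auto simp: pairs_def min_def max_def inj split: if_splits)
  qed
  show "?sort ` pairs N = pairs N"
  proof (rule endo_inj_surj)
    show "?sort ` pairs N \<subseteq> pairs N"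
    proof (rule image_subsetI, clarify)
      fix i j assume "(i, j) \<in> pairs N"
      note permutes_apply_pair[OF \<sigma> this]
      then show "(min (\<sigma> i) (\<sigma> j), max (\<sigma> i) (\<sigma> j)) \<in> pairs N"
        by (auto simp: pairs_def min_def max_def)
    qed
  qed (simp_all add: \<open>inj_on ?sort (pairs N)\<close>)
qed

lemma prod_pairs_permute:
  fixes h :: "nat \<Rightarrow> nat \<Rightarrow> 'a::comm_ring_1"
  assumes \<sigma>: "\<sigma> permutes {1..N}"
    and antisym: "\<And>u v. u \<in> {1..N} \<Longrightarrow> v \<in> {1..N} \<Longrightarrow> u \<noteq> v \<Longrightarrow> h v u = - h u v"
  shows "(\<Prod>(i, j)\<in>pairs N. h (\<sigma> i) (\<sigma> j))
    = (- 1) ^ inversions N \<sigma> * (\<Prod>(i, j)\<in>pairs N. h i j)"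
proof -
  define sort where "sort = (\<lambda>(i, j). (min (\<sigma> i) (\<sigma> j), max (\<sigma> i) (\<sigma> j)))"
  have "bij_betw sort (pairs N) (pairs N)"
    unfolding sort_def by (rule bij_betw_sort_permuted_pairs[OF \<sigma>])
  then have reindex: "(\<Prod>(i, j)\<in>pairs N. h i j) = (\<Prod>p\<in>pairs N. (\<lambda>(i, j). h i j) (sort p))"
    by (rule prod.reindex_bij_betw[symmetric])
  have flip: "(\<lambda>(i, j). h (\<sigma> i) (\<sigma> j)) p
      = (if \<sigma> (snd p) < \<sigma> (fst p) then - 1 else 1) * (\<lambda>(i, j). h i j) (sort p)"
    if "p \<in> pairs N" for p
  proof -
    obtain i j where p: "p = (i, j)" by fastforce
    have "\<sigma> i \<in> {1..N}" "\<sigma> j \<in> {1..N}" "\<sigma> i \<noteq> \<sigma> j"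
      using permutes_apply_pair[OF \<sigma>] that p by blast+
    then show ?thesis
      using antisym[of "\<sigma> j" "\<sigma> i"] by (simp add: p sort_def min_def max_def)
  qed
  have "{p \<in> pairs N. \<sigma> (snd p) < \<sigma> (fst p)} = {(i, j) \<in> pairs N. \<sigma> j < \<sigma> i}"
    by auto
  then have sign:
    "(\<Prod>p\<in>pairs N. if \<sigma> (snd p) < \<sigma> (fst p) then - 1 else 1) = (- 1 :: 'a) ^ inversions N \<sigma>"
    by (simp add: prod_if_neg_one inversions_eq_card_pairs)
  have "(\<Prod>(i, j)\<in>pairs N. h (\<sigma> i) (\<sigma> j))
      = (\<Prod>p\<in>pairs N. (if \<sigma> (snd p) < \<sigma> (fst p) then - 1 else 1) * (\<lambda>(i, j). h i j) (sort p))"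
    by (rule prod.cong[OF refl flip])
  also have "\<dots> = (\<Prod>p\<in>pairs N. if \<sigma> (snd p) < \<sigma> (fst p) then - 1 else 1)
      * (\<Prod>p\<in>pairs N. (\<lambda>(i, j). h i j) (sort p))"
    by (rule prod.distrib)
  finally show ?thesis by (simp only: sign reindex)
qed

lemma odd_inversions_transpose:
  assumes "a \<in> {1..N}" "b \<in> {1..N}" "a < b"
  shows "odd (inversions N (transpose a b))"
proof -
  let ?t = "transpose a b"
  have "{(i, j) \<in> pairs N. ?t j < ?t i}
      = insert (a, b) (Pair a ` {a<..<b} \<union> (\<lambda>m. (m, b)) ` {a<..<b})"
  proof (rule set_eqI, clarify)
    fix i j
    show "(i, j) \<in> {(i, j) \<in> pairs N. ?t j < ?t i}
        \<longleftrightarrow> (i, j) \<in> insert (a, b) (Pair a ` {a<..<b} \<union> (\<lambda>m. (m, b)) ` {a<..<b})"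
      using assms unfolding pairs_def
      by (cases "i = a"; cases "i = b"; cases "j = a"; cases "j = b") (auto simp: transpose_def)
  qed
  moreover have "card (Pair a ` {a<..<b} \<union> (\<lambda>m. (m, b)) ` {a<..<b}) = 2 * (b - Suc a)"
    by (subst card_Un_disjoint) (auto simp: card_image inj_on_def)
  moreover have "(a, b) \<notin> Pair a ` {a<..<b} \<union> (\<lambda>m. (m, b)) ` {a<..<b}"
    by auto
  ultimately show ?thesis by (simp add: inversions_eq_card_pairs)
qed

lemma inversions_inv:
  assumes w: "w permutes {1..N}"
  shows "inversions N (inv w) = inversions N w"
proof -
  have range: "w x \<in> {1..N} \<longleftrightarrow> x \<in> {1..N}" "inv w x \<in> {1..N} \<longleftrightarrow> x \<in> {1..N}" for x
    using permutes_in_image[OF w] permutes_in_image[OF permutes_inv[OF w]] by blast+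
  have "bij_betw (\<lambda>(i, j). (w j, w i))
      {(i, j) \<in> pairs N. w j < w i} {(a, b) \<in> pairs N. inv w b < inv w a}"
    by (rule bij_betw_byWitness[where f' = "\<lambda>(a, b). (inv w b, inv w a)"])
      (auto simp: pairs_def range permutes_inverses[OF w] simp del: atLeastAtMost_iff One_nat_def)
  then show ?thesis
    by (simp add: inversions_eq_card_pairs bij_betw_same_card)
qed

section \<open>Tournaments and their scores\<close>

definition beats :: "nat \<Rightarrow> (nat \<times> nat) set \<Rightarrow> nat \<Rightarrow> nat \<Rightarrow> bool" where
  "beats N B x y \<longleftrightarrow> (x, y) \<in> B \<or> (y, x) \<in> pairs N - B"

definition wins :: "nat \<Rightarrow> (nat \<times> nat) set \<Rightarrow> nat \<Rightarrow> nat" where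
  "wins N B x = card {y. beats N B x y}"

lemma beats_imp_players:
  "B \<subseteq> pairs N \<Longrightarrow> beats N B x y \<Longrightarrow> x \<in> {1..N} \<and> y \<in> {1..N} \<and> x \<noteq> y"
  unfolding beats_def pairs_def by blast

lemma beats_total:
  "x \<in> {1..N} \<Longrightarrow> y \<in> {1..N} \<Longrightarrow> x \<noteq> y \<Longrightarrow> beats N B x y \<or> beats N B y x"
  unfolding beats_def pairs_def by (cases "x < y") auto

lemma beats_asym: "B \<subseteq> pairs N \<Longrightarrow> beats N B x y \<Longrightarrow> \<not> beats N B y x"
  unfolding beats_def by (blast dest: less_of_mem_pairs less_asym)

lemma beats_iff_mem: "B \<subseteq> pairs N \<Longrightarrow> (i, j) \<in> pairs N \<Longrightarrow> beats N B i j \<longleftrightarrow> (i, j) \<in> B"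
  unfolding beats_def pairs_def by auto

lemma beats_converse_iff:
  "B \<subseteq> pairs N \<Longrightarrow> (i, j) \<in> pairs N \<Longrightarrow> beats N B j i \<longleftrightarrow> (i, j) \<notin> B"
  unfolding beats_def by (blast dest: less_of_mem_pairs less_asym)

lemma beats_pairs: "beats N (pairs N) x y \<longleftrightarrow> x \<in> {1..N} \<and> y \<in> {1..N} \<and> x < y"
  by (auto simp: beats_def pairs_def)

lemma lookup_score:
  assumes B: "B \<subseteq> pairs N"
  shows "Poly_Mapping.lookup (score N B) x = wins N B x"
proof -
  let ?W = "{p\<in>B. fst p = x}" and ?L = "{p\<in>pairs N - B. snd p = x}"
  have "finite B" using B by (rule finite_subset) simp
  have "Poly_Mapping.lookup (score N B) x = card ?W + card ?L"
    using \<open>finite B\<close>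
    by (simp add: score_def lookup_add lookup_sum lookup_single when_def case_prod_beta
        sum.If_cases Int_def)
  also have "\<dots> = card (snd ` ?W) + card (fst ` ?L)"
    by (simp add: card_image inj_on_def prod_eq_iff)
  also have "\<dots> = card (snd ` ?W \<union> fst ` ?L)"
  proof (rule card_Un_disjoint[symmetric])
    show "snd ` ?W \<inter> fst ` ?L = {}"
      using B by (force dest: less_of_mem_pairs)
  qed (use \<open>finite B\<close> in simp_all)
  also have "snd ` ?W \<union> fst ` ?L = {y. beats N B x y}"
    by (force simp: beats_def image_iff)
  finally show ?thesis by (simp add: wins_def)
qed

lemma finite_beats: "B \<subseteq> pairs N \<Longrightarrow> finite {y. beats N B x y}"
  by (rule finite_subset[of _ "{1..N}"]) (use beats_imp_players in blast, simp)

lemma wins_less: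
  assumes "B \<subseteq> pairs N" "x \<in> {1..N}"
  shows "wins N B x < N"
proof -
  have "{y. beats N B x y} \<subseteq> {1..N} - {x}" using assms beats_imp_players by blast
  then have "wins N B x \<le> card ({1..N} - {x})" unfolding wins_def by (rule card_mono[rotated]) simp
  also have "\<dots> = N - 1" using assms(2) by simp
  finally show ?thesis using assms(2) by simp arith
qed

lemma card_wins_less:
  assumes B: "B \<subseteq> pairs N" and inj: "inj_on (wins N B) {1..N}" and "m \<le> N"
  shows "card {y\<in>{1..N}. wins N B y < m} = m"
proof -
  let ?s = "wins N B"
  have img: "?s ` {1..N} = {0..<N}"
  proof (rule card_subset_eq)
    show "?s ` {1..N} \<subseteq> {0..<N}" using wins_less[OF B] by auto
    show "card (?s ` {1..N}) = card {0..<N}" using card_image[OF inj] by simp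
  qed simp
  have "?s ` {y\<in>{1..N}. ?s y < m} = {0..<m}"
  proof
    show "{0..<m} \<subseteq> ?s ` {y\<in>{1..N}. ?s y < m}"
    proof
      fix k assume k: "k \<in> {0..<m}"
      then have "k \<in> ?s ` {1..N}" using img \<open>m \<le> N\<close> by simp
      then obtain y where "y \<in> {1..N}" "k = ?s y" by blast
      with k show "k \<in> ?s ` {y\<in>{1..N}. ?s y < m}" by auto
    qed
  qed auto
  moreover have "inj_on ?s {y\<in>{1..N}. ?s y < m}" using inj by (rule inj_on_subset) auto
  ultimately show ?thesis using card_image by fastforce
qed

text \<open>By induction on the score: the players with fewer wins than \<open>x\<close> all lose to \<open>x\<close>,
  and by \<open>card_wins_less\<close> there are exactly as many of them as \<open>x\<close> has wins.\<close>
lemma beats_iff_wins_less: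
  assumes B: "B \<subseteq> pairs N" and inj: "inj_on (wins N B) {1..N}" and x: "x \<in> {1..N}"
  shows "beats N B x y \<longleftrightarrow> y \<in> {1..N} \<and> wins N B y < wins N B x"
proof -
  let ?s = "wins N B"
  have "{y. beats N B x y} = {y\<in>{1..N}. ?s y < ?s x}"
    using x
  proof (induction "?s x" arbitrary: x rule: less_induct)
    case less
    have "{y\<in>{1..N}. ?s y < ?s x} \<subseteq> {y. beats N B x y}"
    proof
      fix z assume z: "z \<in> {y\<in>{1..N}. ?s y < ?s x}"
      then have z_beats: "{y. beats N B z y} = {y\<in>{1..N}. ?s y < ?s z}" using less by blast
      have "\<not> beats N B z x"
      proof
        assume "beats N B z x"
        then have "?s x < ?s z" using z_beats by blast
        with z show False by simp
      qed
      then show "z \<in> {y. beats N B x y}" using beats_total[of x N z B] less.prems z by auto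
    qed
    moreover have "card {y\<in>{1..N}. ?s y < ?s x} = card {y. beats N B x y}"
      using card_wins_less[OF B inj, of "?s x"] wins_less[OF B less.prems]
      unfolding wins_def[of N B x] by simp
    ultimately show ?case using card_subset_eq[OF finite_beats[OF B]] by metis
  qed
  then show ?thesis by auto
qed

lemma neg_one_power_card_upsets:
  assumes "B \<subseteq> pairs N"
  shows "(- 1 :: int) ^ card (pairs N - B) = (\<Prod>(i, j)\<in>pairs N. if beats N B j i then - 1 else 1)"
proof -
  have "(\<Prod>(i, j)\<in>pairs N. if beats N B j i then - 1 else 1)
      = (\<Prod>p\<in>pairs N. if p \<notin> B then - 1 else 1 :: int)"
    using beats_converse_iff[OF assms] by (intro prod.cong) auto
  also have "\<dots> = (- 1) ^ card (pairs N - B)"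
    by (simp add: prod_if_neg_one set_diff_eq)
  finally show ?thesis ..
qed

section \<open>Relabelling the players\<close>

definition relabel :: "nat \<Rightarrow> (nat \<Rightarrow> nat) \<Rightarrow> (nat \<times> nat) set \<Rightarrow> (nat \<times> nat) set" where
  "relabel N \<sigma> B = {(i, j) \<in> pairs N. beats N B (\<sigma> i) (\<sigma> j)}"

lemma relabel_subset: "relabel N \<sigma> B \<subseteq> pairs N"
  by (auto simp: relabel_def)

lemma beats_relabel:
  assumes \<sigma>: "\<sigma> permutes {1..N}" and B: "B \<subseteq> pairs N"
  shows "beats N (relabel N \<sigma> B) x y \<longleftrightarrow> beats N B (\<sigma> x) (\<sigma> y)"
proof -
  have in_range: "\<sigma> u \<in> {1..N} \<longleftrightarrow> u \<in> {1..N}" for u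
    using permutes_in_image[OF \<sigma>] .
  have inj: "\<sigma> u = \<sigma> v \<longleftrightarrow> u = v" for u v
    using permutes_inj[OF \<sigma>] by (auto dest: injD)
  show ?thesis
  proof
    assume "beats N (relabel N \<sigma> B) x y"
    then consider "(x, y) \<in> pairs N" "beats N B (\<sigma> x) (\<sigma> y)"
      | "(y, x) \<in> pairs N" "\<not> beats N B (\<sigma> y) (\<sigma> x)"
      by (auto simp: beats_def relabel_def)
    then show "beats N B (\<sigma> x) (\<sigma> y)"
    proof cases
      case 2
      then show ?thesis using permutes_apply_pair[OF \<sigma> 2(1)] beats_total by blast
    qed
  next
    assume b: "beats N B (\<sigma> x) (\<sigma> y)"
    then have "x \<in> {1..N}" "y \<in> {1..N}" "x \<noteq> y"
      using beats_imp_players[OF B b] in_range inj by blast+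
    then consider "(x, y) \<in> pairs N" | "(y, x) \<in> pairs N"
      by (cases x y rule: linorder_cases) (auto simp: pairs_def)
    then show "beats N (relabel N \<sigma> B) x y"
      using b beats_asym[OF B b] by cases (auto simp: beats_def relabel_def)
  qed
qed

lemma relabel_relabel:
  assumes "\<sigma> permutes {1..N}" "\<tau> permutes {1..N}" "B \<subseteq> pairs N"
  shows "relabel N \<sigma> (relabel N \<tau> B) = relabel N (\<tau> \<circ> \<sigma>) B"
  using beats_relabel[OF assms(2,3)] by (simp add: relabel_def)

lemma relabel_id: "B \<subseteq> pairs N \<Longrightarrow> relabel N id B = B"
  by (auto simp: relabel_def beats_def dest: less_of_mem_pairs less_asym)

lemma wins_relabel:
  assumes \<sigma>: "\<sigma> permutes {1..N}" and B: "B \<subseteq> pairs N"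
  shows "wins N (relabel N \<sigma> B) x = wins N B (\<sigma> x)"
proof -
  have "{y. beats N (relabel N \<sigma> B) x y} = \<sigma> -` {y. beats N B (\<sigma> x) y}"
    using beats_relabel[OF assms] by auto
  moreover have "card (\<sigma> -` {y. beats N B (\<sigma> x) y}) = card {y. beats N B (\<sigma> x) y}"
    using permutes_bij[OF \<sigma>] by (intro card_vimage_inj) (auto simp: bij_def)
  ultimately show ?thesis by (simp add: wins_def)
qed

lemma sign_relabel:
  assumes \<sigma>: "\<sigma> permutes {1..N}" and B: "B \<subseteq> pairs N"
  shows "(- 1 :: int) ^ card (pairs N - relabel N \<sigma> B)
    = (- 1) ^ inversions N \<sigma> * (- 1) ^ card (pairs N - B)"
proof -
  define \<epsilon> where "\<epsilon> u v = (if beats N B v u then - 1 else 1 :: int)" for u v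
  have "\<epsilon> v u = - \<epsilon> u v" if "u \<in> {1..N}" "v \<in> {1..N}" "u \<noteq> v" for u v
    using beats_total[OF that] beats_asym[OF B] by (auto simp: \<epsilon>_def)
  then have "(\<Prod>(i, j)\<in>pairs N. \<epsilon> (\<sigma> i) (\<sigma> j)) = (- 1) ^ inversions N \<sigma> * (\<Prod>(i, j)\<in>pairs N. \<epsilon> i j)"
    by (rule prod_pairs_permute[OF \<sigma>])
  then show ?thesis
    by (simp add: neg_one_power_card_upsets relabel_subset B beats_relabel[OF \<sigma> B] \<epsilon>_def)
qed

section \<open>Transitive tournaments\<close>

text \<open>In \<open>relabel N \<sigma> (pairs N)\<close> player \<open>x\<close> beats \<open>y\<close> iff \<open>\<sigma> x < \<sigma> y\<close>; for \<open>\<sigma> = inv w\<close> this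
  is the ranking \<open>w 1, w 2, \<dots>, w N\<close>, which produces the monomial \<open>z\<^bsup>w(\<delta>)\<^esup>\<close>.\<close>

lemma wins_relabel_pairs:
  assumes \<sigma>: "\<sigma> permutes {1..N}" and x: "x \<in> {1..N}"
  shows "wins N (relabel N \<sigma> (pairs N)) x = N - \<sigma> x"
proof -
  have "\<sigma> x \<in> {1..N}" using permutes_in_image[OF \<sigma>] x by blast
  then have "{y. beats N (pairs N) (\<sigma> x) y} = {\<sigma> x<..N}"
    by (auto simp: beats_pairs)
  then show ?thesis using wins_relabel[OF \<sigma> subset_refl, of x] by (simp add: wins_def)
qed

lemma card_upsets_relabel_pairs:
  assumes \<sigma>: "\<sigma> permutes {1..N}"
  shows "card (pairs N - relabel N \<sigma> (pairs N)) = inversions N \<sigma>"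
proof -
  have "pairs N - relabel N \<sigma> (pairs N) = {(i, j) \<in> pairs N. \<sigma> j < \<sigma> i}"
  proof (rule set_eqI, clarify)
    fix i j
    show "(i, j) \<in> pairs N - relabel N \<sigma> (pairs N) \<longleftrightarrow> (i, j) \<in> {(i, j) \<in> pairs N. \<sigma> j < \<sigma> i}"
    proof (cases "(i, j) \<in> pairs N")
      case True
      note permutes_apply_pair[OF \<sigma> True]
      then show ?thesis by (auto simp: relabel_def beats_pairs)
    qed (simp add: relabel_def)
  qed
  then show ?thesis by (simp add: inversions_eq_card_pairs)
qed

lemma score_relabel_inv_pairs:
  assumes w: "w permutes {1..N}"
  shows "score N (relabel N (inv w) (pairs N)) = (\<Sum>i\<in>{1..N}. Poly_Mapping.single (w i) (N - i))"
proof (rule poly_mapping_eqI)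
  fix x
  have w_eq: "w i = x \<longleftrightarrow> i = inv w x" for i
    by (metis permutes_inverses[OF w])
  have inv_range: "inv w x \<in> {1..N} \<longleftrightarrow> x \<in> {1..N}"
    using permutes_in_image[OF permutes_inv[OF w]] .
  have "Poly_Mapping.lookup (\<Sum>i\<in>{1..N}. Poly_Mapping.single (w i) (N - i)) x
      = (if x \<in> {1..N} then N - inv w x else 0)"
    by (simp add: lookup_sum lookup_single when_def w_eq inv_range sum.delta'
        del: atLeastAtMost_iff One_nat_def)
  also have "\<dots> = wins N (relabel N (inv w) (pairs N)) x"
  proof (cases "x \<in> {1..N}")
    case True
    then show ?thesis by (simp add: wins_relabel_pairs[OF permutes_inv[OF w]])
  next
    case False
    then have "{y. beats N (relabel N (inv w) (pairs N)) x y} = {}"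
      using beats_imp_players[OF relabel_subset] by blast
    with False show ?thesis by (simp add: wins_def del: atLeastAtMost_iff)
  qed
  finally show "Poly_Mapping.lookup (score N (relabel N (inv w) (pairs N))) x
      = Poly_Mapping.lookup (\<Sum>i\<in>{1..N}. Poly_Mapping.single (w i) (N - i)) x"
    by (simp add: lookup_score[OF relabel_subset])
qed

lemma inj_on_relabel_inv_pairs: "inj_on (\<lambda>w. relabel N (inv w) (pairs N)) {w. w permutes {1..N}}"
proof (rule inj_onI)
  fix w w' assume w: "w \<in> {w. w permutes {1..N}}" and w': "w' \<in> {w. w permutes {1..N}}"
    and eq: "relabel N (inv w) (pairs N) = relabel N (inv w') (pairs N)"
  have w_inv: "inv w permutes {1..N}" "inv w' permutes {1..N}"
    using w w' by (simp_all add: permutes_inv)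
  have "inv w x = inv w' x" for x
  proof (cases "x \<in> {1..N}")
    case True
    then have "N - inv w x = N - inv w' x"
      using eq wins_relabel_pairs[OF w_inv(1) True] wins_relabel_pairs[OF w_inv(2) True] by simp
    moreover have "inv w x \<in> {1..N}" "inv w' x \<in> {1..N}"
      using True permutes_in_image[OF w_inv(1)] permutes_in_image[OF w_inv(2)] by blast+
    ultimately show ?thesis by simp arith
  next
    case False
    then show ?thesis using permutes_not_in[OF w_inv(1)] permutes_not_in[OF w_inv(2)] by simp
  qed
  then show "w = w'"
    using w w' by (metis ext permutes_inv_inv mem_Collect_eq)
qed

lemma inj_wins_iff_relabel_pairs:
  assumes B: "B \<subseteq> pairs N"
  shows "inj_on (wins N B) {1..N} \<longleftrightarrow> (\<exists>w. w permutes {1..N} \<and> B = relabel N (inv w) (pairs N))"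
proof
  assume inj: "inj_on (wins N B) {1..N}"
  define r where "r x = (if x \<in> {1..N} then N - wins N B x else x)" for x
  have r_range: "r x \<in> {1..N}" if "x \<in> {1..N}" for x
    using wins_less[OF B that] that by (simp add: r_def)
  have "inj_on r {1..N}"
  proof (rule inj_onI)
    fix x y assume x: "x \<in> {1..N}" and y: "y \<in> {1..N}" and "r x = r y"
    then have "wins N B x = wins N B y"
      using wins_less[OF B x] wins_less[OF B y] by (simp add: r_def)
    then show "x = y" by (rule inj_onD[OF inj _ x y])
  qed
  moreover have "r ` {1..N} = {1..N}"
    using r_range by (intro endo_inj_surj \<open>inj_on r {1..N}\<close>) auto
  ultimately have r: "r permutes {1..N}"
    by (intro bij_imp_permutes) (auto simp: bij_betw_def r_def)
  have "B = relabel N r (pairs N)"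
  proof (rule set_eqI, clarify)
    fix i j
    show "(i, j) \<in> B \<longleftrightarrow> (i, j) \<in> relabel N r (pairs N)"
    proof (cases "(i, j) \<in> pairs N")
      case True
      then have ij: "i \<in> {1..N}" "j \<in> {1..N}" by (auto simp: pairs_def)
      have "(i, j) \<in> B \<longleftrightarrow> wins N B j < wins N B i"
        using beats_iff_mem[OF B True] beats_iff_wins_less[OF B inj ij(1)] ij(2) by simp
      also have "\<dots> \<longleftrightarrow> r i < r j"
        using wins_less[OF B ij(1)] wins_less[OF B ij(2)] ij by (auto simp: r_def)
      finally show ?thesis
        using True r_range ij by (simp add: relabel_def beats_pairs)
    next
      case False
      then show ?thesis using B relabel_subset by blast
    qed
  qed
  then show "\<exists>w. w permutes {1..N} \<and> B = relabel N (inv w) (pairs N)"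
    using r by (metis permutes_inv permutes_inv_inv)
next
  assume "\<exists>w. w permutes {1..N} \<and> B = relabel N (inv w) (pairs N)"
  then obtain w where w: "w permutes {1..N}" and B_eq: "B = relabel N (inv w) (pairs N)"
    by blast
  have inv_w: "inv w permutes {1..N}" using permutes_inv[OF w] .
  show "inj_on (wins N B) {1..N}"
  proof (rule inj_onI)
    fix x y assume x: "x \<in> {1..N}" and y: "y \<in> {1..N}" and "wins N B x = wins N B y"
    then have "N - inv w x = N - inv w y" by (simp add: B_eq wins_relabel_pairs[OF inv_w])
    moreover have "inv w x \<in> {1..N}" "inv w y \<in> {1..N}"
      using x y permutes_in_image[OF inv_w] by blast+
    ultimately have "inv w x = inv w y" by simp arith
    then show "x = y" using permutes_inj[OF inv_w] by (simp add: inj_eq)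
  qed
qed

lemma sum_transitive_tournament_terms:
  "(\<Sum>B | B \<subseteq> pairs N \<and> inj_on (wins N B) {1..N}. tournament_term N B)
    = (\<Sum>w | w permutes {1..N}.
        const ((- tvar) ^ inversions N w) * (\<Prod>i\<in>{1..N}. zvar (w i) ^ (N - i)))"
proof -
  have "{B. B \<subseteq> pairs N \<and> inj_on (wins N B) {1..N}}
      = (\<lambda>w. relabel N (inv w) (pairs N)) ` {w. w permutes {1..N}}"
  proof (intro set_eqI iffI)
    fix B assume "B \<in> {B. B \<subseteq> pairs N \<and> inj_on (wins N B) {1..N}}"
    then obtain w where "w permutes {1..N}" "B = relabel N (inv w) (pairs N)"
      using inj_wins_iff_relabel_pairs by blast
    then show "B \<in> (\<lambda>w. relabel N (inv w) (pairs N)) ` {w. w permutes {1..N}}" by blast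
  next
    fix B assume "B \<in> (\<lambda>w. relabel N (inv w) (pairs N)) ` {w. w permutes {1..N}}"
    then obtain w where "w permutes {1..N}" "B = relabel N (inv w) (pairs N)" by blast
    then show "B \<in> {B. B \<subseteq> pairs N \<and> inj_on (wins N B) {1..N}}"
      using inj_wins_iff_relabel_pairs[of B N] relabel_subset by blast
  qed
  then have "(\<Sum>B | B \<subseteq> pairs N \<and> inj_on (wins N B) {1..N}. tournament_term N B)
      = (\<Sum>w | w permutes {1..N}. tournament_term N (relabel N (inv w) (pairs N)))"
    using sum.reindex[OF inj_on_relabel_inv_pairs, of "tournament_term N" N] by (simp add: comp_def)
  also have "\<dots> = (\<Sum>w | w permutes {1..N}.
      const ((- tvar) ^ inversions N w) * (\<Prod>i\<in>{1..N}. zvar (w i) ^ (N - i)))"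
  proof (rule sum.cong[OF refl])
    fix w assume "w \<in> {w. w permutes {1..N}}"
    then have w: "w permutes {1..N}" by simp
    then show "tournament_term N (relabel N (inv w) (pairs N))
        = const ((- tvar) ^ inversions N w) * (\<Prod>i\<in>{1..N}. zvar (w i) ^ (N - i))"
      by (simp add: tournament_term_def score_relabel_inv_pairs card_upsets_relabel_pairs
          permutes_inv inversions_inv const_mult_prod_zvar_power)
  qed
  finally show ?thesis .
qed

section \<open>Cancellation of the remaining monomials\<close>

text \<open>Relabelling by the transposition of two players with equal scores is a sign-reversing
  involution on the tournaments with that score vector.\<close>
lemma signed_count_score_eq_zero:
  assumes a: "a \<in> {1..N}" and b: "b \<in> {1..N}" and "a \<noteq> b"
    and \<gamma>: "Poly_Mapping.lookup \<gamma> a = Poly_Mapping.lookup \<gamma> b"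
  shows "(\<Sum>B | B \<subseteq> pairs N \<and> score N B = \<gamma>. (- 1 :: int) ^ card (pairs N - B)) = 0"
proof -
  let ?t = "transpose a b"
  let ?S = "{B. B \<subseteq> pairs N \<and> score N B = \<gamma>}"
  have t: "?t permutes {1..N}" using a b by (rule permutes_swap_id)
  have "odd (inversions N ?t)"
    using \<open>a \<noteq> b\<close> odd_inversions_transpose[OF a b] odd_inversions_transpose[OF b a]
    by (cases "a < b") (simp_all add: transpose_commute)
  then have flip: "(- 1 :: int) ^ card (pairs N - relabel N ?t B) = - ((- 1) ^ card (pairs N - B))"
    if "B \<in> ?S" for B
    using sign_relabel[OF t] that by simp
  have score: "score N (relabel N ?t B) = \<gamma>" if "B \<in> ?S" for B
  proof (rule poly_mapping_eqI)
    fix x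
    have B: "B \<subseteq> pairs N" "score N B = \<gamma>" using that by auto
    have "Poly_Mapping.lookup (score N (relabel N ?t B)) x = Poly_Mapping.lookup \<gamma> (?t x)"
      by (simp add: lookup_score[OF relabel_subset] wins_relabel[OF t B(1)]
          lookup_score[OF B(1), symmetric] B(2))
    also have "\<dots> = Poly_Mapping.lookup \<gamma> x"
      using \<gamma> by (simp add: transpose_def)
    finally show "Poly_Mapping.lookup (score N (relabel N ?t B)) x = Poly_Mapping.lookup \<gamma> x" .
  qed
  have maps: "relabel N ?t B \<in> ?S" if "B \<in> ?S" for B
    using score[OF that] relabel_subset by blast
  have "relabel N ?t (relabel N ?t B) = B" if "B \<in> ?S" for B
    using that by (simp add: relabel_relabel[OF t t] relabel_id)
  then have "bij_betw (relabel N ?t) ?S ?S"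
    using maps by (intro bij_betw_byWitness[where f' = "relabel N ?t"]) blast+
  then have "(\<Sum>B\<in>?S. (- 1 :: int) ^ card (pairs N - B))
      = (\<Sum>B\<in>?S. (- 1) ^ card (pairs N - relabel N ?t B))"
    by (rule sum.reindex_bij_betw[symmetric])
  also have "\<dots> = - (\<Sum>B\<in>?S. (- 1) ^ card (pairs N - B))"
    by (simp add: flip sum_negf)
  finally show ?thesis by simp
qed

lemma lookup_sum_tournament_terms:
  "finite S \<Longrightarrow> Poly_Mapping.lookup (\<Sum>B\<in>S. tournament_term N B) \<gamma>
    = (\<Sum>B | B \<in> S \<and> score N B = \<gamma>. (- tvar) ^ card (pairs N - B))"
  by (simp add: tournament_term_def lookup_sum lookup_single when_def sum.inter_filter)

lemma coefficients_nontransitive_part: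
  fixes N :: nat and \<gamma> :: "nat \<Rightarrow>\<^sub>0 nat"
  defines "R \<equiv> (\<Sum>B | B \<subseteq> pairs N \<and> \<not> inj_on (wins N B) {1..N}. tournament_term N B)"
  assumes "Poly_Mapping.lookup R \<gamma> \<noteq> 0"
  shows "(\<exists>i\<in>{1..N}. \<exists>j\<in>{1..N}. i \<noteq> j \<and> Poly_Mapping.lookup \<gamma> i = Poly_Mapping.lookup \<gamma> j)
    \<and> poly (Poly_Mapping.lookup R \<gamma>) 1 = 0"
proof -
  let ?S = "{B. B \<subseteq> pairs N \<and> \<not> inj_on (wins N B) {1..N}}"
  have wins_eq: "wins N B = Poly_Mapping.lookup \<gamma>" if "B \<subseteq> pairs N" "score N B = \<gamma>" for B
    using lookup_score[OF that(1)] that(2) by auto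
  have fin: "finite ?S" by (rule finite_subset[of _ "Pow (pairs N)"]) auto
  have lookup_R: "Poly_Mapping.lookup R \<gamma>
      = (\<Sum>B | B \<in> ?S \<and> score N B = \<gamma>. (- tvar) ^ card (pairs N - B))"
    unfolding R_def by (rule lookup_sum_tournament_terms[OF fin])
  have "{B. B \<in> ?S \<and> score N B = \<gamma>} \<noteq> {}"
  proof
    assume none: "{B. B \<in> ?S \<and> score N B = \<gamma>} = {}"
    have "Poly_Mapping.lookup R \<gamma> = 0" unfolding lookup_R none by simp
    with assms(2) show False by simp
  qed
  then have not_inj: "\<not> inj_on (Poly_Mapping.lookup \<gamma>) {1..N}"
    using wins_eq by auto
  then obtain i j where ij: "i \<in> {1..N}" "j \<in> {1..N}" "i \<noteq> j"
    "Poly_Mapping.lookup \<gamma> i = Poly_Mapping.lookup \<gamma> j"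
    unfolding inj_on_def by blast
  have "{B. B \<in> ?S \<and> score N B = \<gamma>} = {B. B \<subseteq> pairs N \<and> score N B = \<gamma>}"
    using wins_eq not_inj by auto
  then have "poly (Poly_Mapping.lookup R \<gamma>) 1
      = (\<Sum>B | B \<subseteq> pairs N \<and> score N B = \<gamma>. (- 1) ^ card (pairs N - B))"
    by (simp add: lookup_R poly_sum poly_power tvar_def)
  also have "\<dots> = 0"
    by (rule signed_count_score_eq_zero[OF ij])
  finally show ?thesis using ij by blast
qed

theorem mainTheorem1:
  fixes N :: nat
  assumes "N \<ge> 1"
  shows "\<exists>R :: mpoly.
    (\<Prod>(i, j) \<in> {(i, j). i \<in> {1..N} \<and> j \<in> {1..N} \<and> i < j}.
        zvar i - const tvar * zvar j)
    = (\<Sum>w \<in> {w. w permutes {1..N}}.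
         const ((- tvar) ^ inversions N w) * (\<Prod>i \<in> {1..N}. zvar (w i) ^ (N - i)))
      + R
    \<and> (\<forall>\<gamma> :: nat \<Rightarrow>\<^sub>0 nat. Poly_Mapping.lookup R \<gamma> \<noteq> 0 \<longrightarrow>
          (\<exists>i \<in> {1..N}. \<exists>j \<in> {1..N}. i \<noteq> j \<and> Poly_Mapping.lookup \<gamma> i = Poly_Mapping.lookup \<gamma> j)
          \<and> poly (Poly_Mapping.lookup R \<gamma>) 1 = 0)"
proof -
  define R where "R = (\<Sum>B | B \<subseteq> pairs N \<and> \<not> inj_on (wins N B) {1..N}. tournament_term N B)"
  have "(\<Prod>(i, j) \<in> {(i, j). i \<in> {1..N} \<and> j \<in> {1..N} \<and> i < j}. zvar i - const tvar * zvar j)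
      = (\<Sum>B\<in>Pow (pairs N). tournament_term N B)"
    using prod_pairs_eq_sum_tournament_terms by (simp add: pairs_def)
  also have "\<dots> = (\<Sum>B | B \<subseteq> pairs N \<and> inj_on (wins N B) {1..N}. tournament_term N B) + R"
    unfolding R_def by (subst sum.Int_Diff[of _ _ "{B. inj_on (wins N B) {1..N}}"])
      (auto intro!: arg_cong2[where f = "(+)"] sum.cong)
  also have "(\<Sum>B | B \<subseteq> pairs N \<and> inj_on (wins N B) {1..N}. tournament_term N B)
      = (\<Sum>w \<in> {w. w permutes {1..N}}.
         const ((- tvar) ^ inversions N w) * (\<Prod>i \<in> {1..N}. zvar (w i) ^ (N - i)))"
    by (rule sum_transitive_tournament_terms)
  finally show ?thesis
    using coefficients_nontransitive_part[of N, folded R_def] by blast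
qed

end
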